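(* If $A$ is a coherent Noetherian finitely Jacobson ring, then $A[X_1,\ldots,X_n]$ is finitely Jacobson for every $n\ge 0$.
   Context: All rings are commutative with identity. The setting is constructive mathematics: no law of excluded middle and no Zorn's lemma. For a ring $A$ and a subset $U\subseteq A$, $\langle U\rangle_A$ denotes the ideal generated by $U$. Define $\mathrm{Nil}_A U:=\{a\in A:\exists n\ge 0,\ a^n\in\langle U\rangle_A\}$ and $\mathrm{Jac}_A U:=\{a\in A:\forall b\in A,\ 1\in\langle U\cup\{1-ab\}\rangle_A\}$. A ring $A$ is called finitely Jacobson if every finitely generated ideal $I$ of $A$ satisfies $\mathrm{Jac}_A I\subseteq \mathrm{Nil}_A I$. "Coherent Noetherian" is in the constructive sense of Richman and Seidenberg (as in Mines–Richman–Ruitenburg, A Course in Constructive Algebra). Coherent means that for any finitely many elements $a_1,\dots,a_m\in A$, the module of syzygies $\{(x_1,\dots,x_m)\in A^m:\sum x_ia_i=0\}$ is finitely generated. Noetherian means that every ascending chain $I_1\subseteq I_2\subseteq\cdots$ of finitely generated ideals has some index $k$ with $I_k=I_{k+1}$. Two standard facts hold in this setting: a coherent Noetherian ring satisfies the contraction property (for every finitely generated ideal $J$ of $A[X]$, the ideal $J\cap A$ is finitely generated), and $A[X]$ is coherent Noetherian whenever $A$ is. *)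

theory Defs
  imports Main "HOL-Library.Poly_Mapping"
begin

(* All notions are relative to a carrier S (a subring of the ambient
   comm_ring_1 type); for the base ring A we use S = UNIV. *)

definition ideal_gen :: "'a::comm_ring_1 set \<Rightarrow> 'a set \<Rightarrow> 'a set" where
  "ideal_gen S U = {x. \<exists>F c. finite F \<and> F \<subseteq> U \<and> (\<forall>u\<in>F. c u \<in> S) \<and>
                        x = (\<Sum>u\<in>F. c u * u)}"

definition nil_rad :: "'a::comm_ring_1 set \<Rightarrow> 'a set \<Rightarrow> 'a set" where
  "nil_rad S U = {a\<in>S. \<exists>n::nat. a ^ n \<in> ideal_gen S U}"

definition jac_rad :: "'a::comm_ring_1 set \<Rightarrow> 'a set \<Rightarrow> 'a set" where
  "jac_rad S U = {a\<in>S. \<forall>b\<in>S. 1 \<in> ideal_gen S (U \<union> {1 - a * b})}"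

definition fg_ideal :: "'a::comm_ring_1 set \<Rightarrow> 'a set \<Rightarrow> bool" where
  "fg_ideal S I \<longleftrightarrow> (\<exists>F. finite F \<and> F \<subseteq> S \<and> I = ideal_gen S F)"

definition fin_jacobson :: "'a::comm_ring_1 set \<Rightarrow> bool" where
  "fin_jacobson S \<longleftrightarrow> (\<forall>I. fg_ideal S I \<longrightarrow> jac_rad S I \<subseteq> nil_rad S I)"

definition syzygies :: "'a::comm_ring_1 set \<Rightarrow> nat \<Rightarrow> (nat \<Rightarrow> 'a) \<Rightarrow> (nat \<Rightarrow> 'a) set" where
  "syzygies S m a = {x. (\<forall>i. x i \<in> S) \<and> (\<forall>i\<ge>m. x i = 0) \<and> (\<Sum>i<m. x i * a i) = 0}"

definition module_gen :: "'a::comm_ring_1 set \<Rightarrow> (nat \<Rightarrow> 'a) set \<Rightarrow> (nat \<Rightarrow> 'a) set" where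
  "module_gen S G = {x. \<exists>F c. finite F \<and> F \<subseteq> G \<and> (\<forall>g\<in>F. c g \<in> S) \<and>
                         x = (\<lambda>i. \<Sum>g\<in>F. c g * g i)}"

definition coherent :: "'a::comm_ring_1 set \<Rightarrow> bool" where
  "coherent S \<longleftrightarrow> (\<forall>m a. (\<forall>i<m. a i \<in> S) \<longrightarrow>
      (\<exists>G. finite G \<and> G \<subseteq> syzygies S m a \<and> syzygies S m a = module_gen S G))"

definition noetherian :: "'a::comm_ring_1 set \<Rightarrow> bool" where
  "noetherian S \<longleftrightarrow> (\<forall>I::nat \<Rightarrow> 'a set. (\<forall>k. fg_ideal S (I k)) \<and> (\<forall>k. I k \<subseteq> I (Suc k))
                      \<longrightarrow> (\<exists>k. I k = I (Suc k)))"

(* A[X_0,...,X_{n-1}] as the subring of ((nat =>0 nat) =>0 'a)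
   of polynomials only involving variables with index < n *)
definition mpolys :: "nat \<Rightarrow> (((nat, nat) poly_mapping, 'a::comm_ring_1) poly_mapping) set" where
  "mpolys n = {p. \<forall>mon\<in>Poly_Mapping.keys p. \<forall>i\<in>Poly_Mapping.keys mon. i < n}"

end

theory Submission
  imports Defs "HOL-Computational_Algebra.Polynomial"
begin

text \<open>Every ideal of the Noetherian base ring is finitely generated, so \<open>A\<close>
  is Jacobson in the classical sense, and we show that this property survives adjoining one
  element \<open>x\<close> to a Jacobson subring \<open>S\<close>. If \<open>a\<close> lies in the Jacobson radical of an ideal of
  \<open>S[x]\<close> but no power of \<open>a\<close> lies in it, Zorn's lemma gives a prime \<open>P\<close> avoiding all powers of
  \<open>a\<close>, and \<open>a\<close> is a nonzero element of the Jacobson radical of the domain \<open>S[x]/P\<close>. If \<open>x\<close> is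
  transcendental over \<open>S/(P \<inter> S)\<close> this is impossible by a degree argument. Otherwise let \<open>c\<close> be
  the leading coefficient of a relation of least degree; \<open>a\<close> divides some constant \<open>g \<notin> P\<close>, and
  since \<open>S\<close> is Jacobson there is \<open>b\<close> such that \<open>1 - g c b\<close> is not invertible modulo \<open>P \<inter> S\<close>.
  It is invertible modulo \<open>P\<close>, however, and pseudo-division by the minimal relation turns
  an inverse modulo \<open>P\<close> into one modulo \<open>P \<inter> S\<close>.\<close>

definition subring :: "'a::comm_ring_1 set \<Rightarrow> bool" where
  "subring S \<longleftrightarrow> 0 \<in> S \<and> 1 \<in> S \<and> (\<forall>x\<in>S. \<forall>y\<in>S. x + y \<in> S \<and> x * y \<in> S \<and> x - y \<in> S)"

definition ideal_in :: "'a::comm_ring_1 set \<Rightarrow> 'a set \<Rightarrow> bool" where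
  "ideal_in S I \<longleftrightarrow> I \<subseteq> S \<and> 0 \<in> I \<and> (\<forall>x\<in>I. \<forall>y\<in>I. x + y \<in> I) \<and> (\<forall>s\<in>S. \<forall>x\<in>I. s * x \<in> I)"

definition prime_ideal_in :: "'a::comm_ring_1 set \<Rightarrow> 'a set \<Rightarrow> bool" where
  "prime_ideal_in S P \<longleftrightarrow> ideal_in S P \<and> 1 \<notin> P \<and> (\<forall>y\<in>S. \<forall>z\<in>S. y * z \<in> P \<longrightarrow> y \<in> P \<or> z \<in> P)"

text \<open>\<open>jac_mem S I a\<close> means \<open>a \<in> Jac I\<close>, and \<open>jacobson S\<close> is the classical Jacobson property
  \<open>Jac I \<subseteq> Nil I\<close> for all ideals \<open>I\<close>, not only finitely generated ones.\<close>

definition jac_mem :: "'a::comm_ring_1 set \<Rightarrow> 'a set \<Rightarrow> 'a \<Rightarrow> bool" where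
  "jac_mem S I a \<longleftrightarrow> (\<forall>b\<in>S. \<exists>t\<in>S. 1 - t * (1 - a * b) \<in> I)"

definition jacobson :: "'a::comm_ring_1 set \<Rightarrow> bool" where
  "jacobson S \<longleftrightarrow> (\<forall>I a. ideal_in S I \<and> a \<in> S \<and> jac_mem S I a \<longrightarrow> (\<exists>k. a ^ k \<in> I))"

context
  fixes S :: "'a::comm_ring_1 set"
  assumes S: "subring S"
begin

lemma subring_0: "0 \<in> S" and subring_1: "1 \<in> S"
  using S unfolding subring_def by auto

lemma
  assumes "x \<in> S" "y \<in> S"
  shows subring_add: "x + y \<in> S" and subring_mult: "x * y \<in> S" and subring_diff: "x - y \<in> S"
  using S assms unfolding subring_def by auto

lemma subring_uminus: "x \<in> S \<Longrightarrow> - x \<in> S"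
  using subring_diff[OF subring_0] by simp

lemma subring_sum: "(\<And>i. i \<in> A \<Longrightarrow> f i \<in> S) \<Longrightarrow> sum f A \<in> S"
  by (induction A rule: infinite_finite_induct) (simp_all add: subring_0 subring_add)

lemma subring_power: "x \<in> S \<Longrightarrow> x ^ n \<in> S"
  by (induction n) (simp_all add: subring_1 subring_mult)

lemmas subring_closed = subring_0 subring_1 subring_add subring_mult subring_diff subring_uminus
  subring_power

lemma prime_ideal_in_power:
  assumes P: "prime_ideal_in S P" and y: "y \<in> S"
  shows "y ^ k \<in> P \<Longrightarrow> y \<in> P"
proof (induction k)
  case 0
  then show ?case using P unfolding prime_ideal_in_def by simp
next
  case (Suc k)
  have "\<forall>y\<in>S. \<forall>z\<in>S. y * z \<in> P \<longrightarrow> y \<in> P \<or> z \<in> P"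
    using P unfolding prime_ideal_in_def by blast
  moreover have "y * y ^ k \<in> P" using Suc.prems by simp
  ultimately show ?case using Suc.IH subring_power[OF y, of k] y by blast
qed

end

context
  fixes S I :: "'a::comm_ring_1 set"
  assumes I: "ideal_in S I"
begin

lemma ideal_in_subset: "I \<subseteq> S" and ideal_in_0: "0 \<in> I"
  using I unfolding ideal_in_def by auto

lemma ideal_in_add: "x \<in> I \<Longrightarrow> y \<in> I \<Longrightarrow> x + y \<in> I"
  using I unfolding ideal_in_def by blast

lemma ideal_in_mult_left: "s \<in> S \<Longrightarrow> x \<in> I \<Longrightarrow> s * x \<in> I"
  using I unfolding ideal_in_def by blast

lemma ideal_in_mult_right: "s \<in> S \<Longrightarrow> x \<in> I \<Longrightarrow> x * s \<in> I"
  using ideal_in_mult_left by (simp add: mult.commute)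

lemma ideal_in_sum: "(\<And>i. i \<in> A \<Longrightarrow> f i \<in> I) \<Longrightarrow> sum f A \<in> I"
  by (induction A rule: infinite_finite_induct) (simp_all add: ideal_in_0 ideal_in_add)

context
  assumes S: "subring S"
begin

lemma ideal_in_uminus: "x \<in> I \<Longrightarrow> - x \<in> I"
  using ideal_in_mult_left[OF subring_uminus[OF S subring_1[OF S]]] by simp

lemma ideal_in_diff: "x \<in> I \<Longrightarrow> y \<in> I \<Longrightarrow> x - y \<in> I"
  using ideal_in_add[OF _ ideal_in_uminus, of x y] by simp

lemma ideal_in_diff_cancel: "x - y \<in> I \<Longrightarrow> y \<in> I \<Longrightarrow> x \<in> I"
  using ideal_in_add[of "x - y" y] by simp

end

end

lemma prime_ideal_in_mult:
  "prime_ideal_in S P \<Longrightarrow> y \<in> S \<Longrightarrow> z \<in> S \<Longrightarrow> y \<notin> P \<Longrightarrow> z \<notin> P \<Longrightarrow> y * z \<notin> P"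
  unfolding prime_ideal_in_def by blast

lemma jac_mem_congruent_multiple:
  assumes R: "subring R" and I: "ideal_in R I" and f: "jac_mem R I f"
    and u: "u \<in> R" and g: "g - u * f \<in> I"
  shows "jac_mem R I g"
  unfolding jac_mem_def
proof
  fix b assume b: "b \<in> R"
  then obtain t where t: "t \<in> R" "1 - t * (1 - f * (u * b)) \<in> I"
    using f u subring_mult[OF R] unfolding jac_mem_def by blast
  have "(1 - t * (1 - f * (u * b))) + (t * b) * (g - u * f) = 1 - t * (1 - g * b)"
    by (simp add: algebra_simps)
  moreover have "(t * b) * (g - u * f) \<in> I"
    using ideal_in_mult_left[OF I subring_mult[OF R t(1) b] g] .
  ultimately show "\<exists>t\<in>R. 1 - t * (1 - g * b) \<in> I"
    using ideal_in_add[OF I t(2)] t(1) by metis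
qed

definition polys_over :: "'a::comm_ring_1 set \<Rightarrow> 'a poly set" where
  "polys_over S = {\<phi>. \<forall>i. coeff \<phi> i \<in> S}"

definition adjoin :: "'a::comm_ring_1 set \<Rightarrow> 'a \<Rightarrow> 'a set" where
  "adjoin S x = {poly \<phi> x | \<phi>. \<phi> \<in> polys_over S}"

lemma coeff_polys_over: "\<phi> \<in> polys_over S \<Longrightarrow> coeff \<phi> i \<in> S"
  unfolding polys_over_def by blast

lemma polys_over_closed:
  assumes "subring S"
  shows "0 \<in> polys_over S" "1 \<in> polys_over S"
    "\<phi> \<in> polys_over S \<Longrightarrow> \<psi> \<in> polys_over S \<Longrightarrow> \<phi> + \<psi> \<in> polys_over S"
    "\<phi> \<in> polys_over S \<Longrightarrow> \<psi> \<in> polys_over S \<Longrightarrow> \<phi> - \<psi> \<in> polys_over S"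
    "\<phi> \<in> polys_over S \<Longrightarrow> \<psi> \<in> polys_over S \<Longrightarrow> \<phi> * \<psi> \<in> polys_over S"
    "a \<in> S \<Longrightarrow> \<phi> \<in> polys_over S \<Longrightarrow> smult a \<phi> \<in> polys_over S"
    "a \<in> S \<Longrightarrow> monom a n \<in> polys_over S"
    "a \<in> S \<Longrightarrow> [:a:] \<in> polys_over S"
  using assms unfolding polys_over_def
  by (auto simp: subring_closed coeff_mult coeff_monom coeff_1 intro!: subring_sum)
     (auto simp: coeff_pCons split: nat.splits simp: subring_closed)

lemma poly_in_adjoin: "\<phi> \<in> polys_over S \<Longrightarrow> poly \<phi> x \<in> adjoin S x"
  unfolding adjoin_def by blast

lemma adjoinE:
  assumes "y \<in> adjoin S x"
  obtains \<phi> where "\<phi> \<in> polys_over S" "y = poly \<phi> x"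
  using assms unfolding adjoin_def by blast

context
  fixes S :: "'a::comm_ring_1 set"
  assumes S: "subring S"
begin

lemma subring_adjoin: "subring (adjoin S x)"
  unfolding subring_def
proof (intro conjI ballI)
  show "0 \<in> adjoin S x" "1 \<in> adjoin S x"
    using poly_in_adjoin[OF polys_over_closed(1)[OF S]] poly_in_adjoin[OF polys_over_closed(2)[OF S]]
    by simp_all
next
  fix y z assume "y \<in> adjoin S x" "z \<in> adjoin S x"
  then obtain \<phi> \<psi> where "\<phi> \<in> polys_over S" "\<psi> \<in> polys_over S" "y = poly \<phi> x" "z = poly \<psi> x"
    by (metis adjoinE)
  then show "y + z \<in> adjoin S x" "y * z \<in> adjoin S x" "y - z \<in> adjoin S x"
    using poly_in_adjoin polys_over_closed(3-5)[OF S] by (metis poly_add poly_mult poly_diff)+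
qed

lemma const_in_adjoin: "s \<in> S \<Longrightarrow> s \<in> adjoin S x"
  using poly_in_adjoin[OF polys_over_closed(8)[OF S], of s] by simp

lemma subset_adjoin: "S \<subseteq> adjoin S x"
  using const_in_adjoin by blast

lemma gen_in_adjoin: "x \<in> adjoin S x"
  using poly_in_adjoin[OF polys_over_closed(7)[OF S subring_1[OF S]], of 1 x]
  by (simp add: poly_monom)

end

definition tail_in :: "'a::comm_ring_1 set \<Rightarrow> nat \<Rightarrow> 'a poly \<Rightarrow> bool" where
  "tail_in P n \<phi> \<longleftrightarrow> (\<forall>i\<ge>n. coeff \<phi> i \<in> P)"

lemma tail_in_mono: "tail_in P n \<phi> \<Longrightarrow> n \<le> m \<Longrightarrow> tail_in P m \<phi>"
  unfolding tail_in_def by auto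

lemma tail_in_degree: "0 \<in> P \<Longrightarrow> tail_in P (Suc (degree \<phi>)) \<phi>"
  by (simp add: tail_in_def coeff_eq_0)

lemma tail_in_Suc: "tail_in P (Suc n) \<phi> \<Longrightarrow> coeff \<phi> n \<in> P \<Longrightarrow> tail_in P n \<phi>"
  unfolding tail_in_def by (metis le_antisym not_less_eq_eq)

lemma exists_lead_mod:
  assumes "\<not> tail_in P 0 \<phi>" "0 \<in> P"
  obtains j where "coeff \<phi> j \<notin> P" "tail_in P (Suc j) \<phi>"
proof -
  have ex: "\<exists>n. tail_in P n \<phi>"
    using tail_in_degree[OF assms(2)] by blast
  define n where "n = (LEAST n. tail_in P n \<phi>)"
  have n: "tail_in P n \<phi>" unfolding n_def by (rule LeastI_ex[OF ex])
  then obtain j where j: "n = Suc j" using assms(1) by (cases n) auto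
  have "\<not> tail_in P j \<phi>" using not_less_Least[of j "\<lambda>n. tail_in P n \<phi>"] j unfolding n_def by simp
  then show ?thesis using that n j tail_in_Suc by blast
qed

text \<open>Coefficient \<open>i + d\<close> of \<open>Q m\<close> is \<open>q\<^sub>i c\<close> plus terms that lie in \<open>a\<close> after multiplication by
  \<open>c\<^bsup>N-i-1\<^esup>\<close>, either because the coefficient of \<open>m\<close> is in \<open>a\<close> or by the hypothesis on \<open>q\<^sub>j\<close>, \<open>j > i\<close>.\<close>

lemma lead_power_mult_coeff_in_ideal_step:
  assumes S: "subring S" and a: "ideal_in S a"
    and m: "m \<in> polys_over S" "tail_in a (Suc d) m" and Q: "Q \<in> polys_over S"
    and high: "coeff (Q * m) (i + d) \<in> a" and "i < N"
    and above: "\<And>j. i < j \<Longrightarrow> coeff m d ^ (N - j) * coeff Q j \<in> a"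
  shows "coeff m d ^ (N - i) * coeff Q i \<in> a"
proof -
  define c where "c = coeff m d"
  define e where "e = N - Suc i"
  have e: "N - i = Suc e" using \<open>i < N\<close> unfolding e_def by auto
  have cS: "c ^ n \<in> S" for n unfolding c_def using subring_power[OF S coeff_polys_over[OF m(1)]] .
  have mS: "coeff m j \<in> S" and QS: "coeff Q j \<in> S" for j
    using m(1) Q coeff_polys_over by blast+
  let ?rest = "\<Sum>j\<in>{..i+d} - {i}. coeff Q j * coeff m (i + d - j)"
  have split: "coeff (Q * m) (i + d) = coeff Q i * c + ?rest"
    unfolding coeff_mult c_def by (subst sum.remove[of _ i]) auto
  have "c ^ e * ?rest \<in> a"
    unfolding sum_distrib_left
  proof (rule ideal_in_sum[OF a])
    fix j assume j: "j \<in> {..i+d} - {i}"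
    show "c ^ e * (coeff Q j * coeff m (i + d - j)) \<in> a"
    proof (cases "j < i")
      case True
      then have "coeff m (i + d - j) \<in> a" using m(2) unfolding tail_in_def by auto
      then show ?thesis
        using ideal_in_mult_left[OF a subring_mult[OF S cS QS]] by (simp add: mult.assoc)
    next
      case False
      then have "N - j \<le> e" using j unfolding e_def by auto
      then have "c ^ e = c ^ (e - (N - j)) * c ^ (N - j)" by (simp add: power_add[symmetric])
      then have "c ^ e * (coeff Q j * coeff m (i + d - j))
          = (c ^ (e - (N - j)) * coeff m (i + d - j)) * (c ^ (N - j) * coeff Q j)"
        by (simp add: algebra_simps)
      moreover have "c ^ (N - j) * coeff Q j \<in> a" using above False j unfolding c_def by auto
      ultimately show ?thesis using ideal_in_mult_left[OF a subring_mult[OF S cS mS]] by simp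
    qed
  qed
  moreover have "c ^ e * coeff (Q * m) (i + d) \<in> a"
    using ideal_in_mult_left[OF a cS high] .
  moreover have "c ^ (N - i) * coeff Q i = c ^ e * coeff (Q * m) (i + d) - c ^ e * ?rest"
    unfolding split e by (simp add: algebra_simps)
  ultimately show ?thesis using ideal_in_diff[OF a S] unfolding c_def by simp
qed

lemma lead_power_mult_coeff_in_ideal:
  assumes S: "subring S" and a: "ideal_in S a"
    and m: "m \<in> polys_over S" "tail_in a (Suc d) m" and Q: "Q \<in> polys_over S"
    and high: "\<And>i. coeff (Q * m) (i + d) \<in> a"
  shows "coeff m d ^ (Suc (degree Q) - i) * coeff Q i \<in> a"
proof (induction "Suc (degree Q) - i" arbitrary: i rule: less_induct)
  case less
  show ?case
  proof (cases "i < Suc (degree Q)")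
    case True
    show ?thesis
      by (rule lead_power_mult_coeff_in_ideal_step[OF S a m Q high True])
        (use less True diff_less_mono2 in blast)
  qed (use ideal_in_0[OF a] in \<open>simp add: coeff_eq_0\<close>)
qed

text \<open>Take \<open>i = 0\<close>: then \<open>c\<^sup>N q\<^sub>0 m\<^sub>0 \<in> a\<close>, while \<open>q\<^sub>0 m\<^sub>0 \<equiv> -c\<^sup>k\<close> modulo \<open>a\<close>.\<close>

lemma lead_power_in_ideal_if_mult_const:
  assumes S: "subring S" and a: "ideal_in S a"
    and m: "m \<in> polys_over S" "tail_in a (Suc d) m" "d \<ge> 1" and Q: "Q \<in> polys_over S"
    and high: "\<And>i. i \<ge> 1 \<Longrightarrow> coeff (Q * m) i \<in> a"
    and const: "coeff (Q * m) 0 + coeff m d ^ k \<in> a"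
  shows "\<exists>j. coeff m d ^ j \<in> a"
proof -
  let ?c = "coeff m d" and ?N = "Suc (degree Q)"
  have cS: "?c ^ ?N \<in> S" using subring_power[OF S coeff_polys_over[OF m(1)]] .
  have "?c ^ ?N * (coeff (Q * m) 0 + ?c ^ k) \<in> a"
    using ideal_in_mult_left[OF a cS const] .
  moreover have "?c ^ ?N * coeff (Q * m) 0 \<in> a"
    using ideal_in_mult_left[OF a coeff_polys_over[OF m(1)]
        lead_power_mult_coeff_in_ideal[OF S a m(1,2) Q, of 0]] high m(3)
    by (simp add: coeff_mult algebra_simps)
  moreover have "?c ^ (?N + k) = ?c ^ ?N * (coeff (Q * m) 0 + ?c ^ k) - ?c ^ ?N * coeff (Q * m) 0"
    by (simp add: algebra_simps power_add)
  ultimately show ?thesis using ideal_in_diff[OF a S] by metis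
qed

lemma unit_mod_ideal_if_power_in:
  assumes S: "subring S" and I: "ideal_in S I" and "n \<in> S" "v \<in> S" "s \<in> S"
    and "1 - n = c * v" and "c ^ j - s * n \<in> I"
  shows "\<exists>t\<in>S. 1 - t * n \<in> I"
proof
  let ?w = "\<Sum>i<j. (1 - n) ^ i"
  have "1 - (?w + s * v ^ j) * n = (1 - n * ?w) - s * n * v ^ j" by (simp add: algebra_simps)
  also have "\<dots> = (1 - n) ^ j - s * n * v ^ j"
    using one_diff_power_eq[of "1 - n" j] by (simp add: algebra_simps)
  also have "\<dots> = (c * v) ^ j - s * n * v ^ j"
    using assms(6) by simp
  also have "\<dots> = v ^ j * (c ^ j - s * n)" by (simp add: algebra_simps power_mult_distrib)
  finally show "1 - (?w + s * v ^ j) * n \<in> I"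
    using ideal_in_mult_left[OF I subring_power[OF S \<open>v \<in> S\<close>] assms(7)] by simp
  show "?w + s * v ^ j \<in> S"
    using assms(3-5) by (intro subring_sum[OF S] subring_closed[OF S])
qed

locale ideal_of_adjoin =
  fixes S :: "'a::comm_ring_1 set" and x :: 'a and P :: "'a set"
  assumes subring: "subring S" and ideal: "ideal_in (adjoin S x) P"
begin

abbreviation "T \<equiv> adjoin S x"

lemmas subring_T = subring_adjoin[OF subring, of x]
lemmas S_subset_T = subset_adjoin[OF subring, of x]
lemmas x_in_T = gen_in_adjoin[OF subring, of x]

lemmas P_0 = ideal_in_0[OF ideal]
lemmas P_add = ideal_in_add[OF ideal]
lemmas P_mult_left = ideal_in_mult_left[OF ideal]
lemmas P_mult_right = ideal_in_mult_right[OF ideal]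
lemmas P_sum = ideal_in_sum[OF ideal]
lemmas P_uminus = ideal_in_uminus[OF ideal subring_T]
lemmas P_diff = ideal_in_diff[OF ideal subring_T]
lemmas P_diff_cancel = ideal_in_diff_cancel[OF ideal subring_T]

lemma coeff_in_T: "\<phi> \<in> polys_over S \<Longrightarrow> coeff \<phi> i \<in> T"
  using S_subset_T coeff_polys_over by blast

lemma poly_in_P:
  assumes "\<phi> \<in> polys_over S" "tail_in P 0 \<phi>"
  shows "poly \<phi> x \<in> P"
proof -
  have "poly \<phi> x = (\<Sum>i\<le>degree \<phi>. x ^ i * coeff \<phi> i)" by (simp add: poly_altdef mult.commute)
  also have "\<dots> \<in> P"
    using assms(2)
    by (intro P_sum P_mult_left subring_power[OF subring_T x_in_T]) (simp add: tail_in_def)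
  finally show ?thesis .
qed

lemma poly_minus_coeff_0_in_P:
  assumes \<phi>: "\<phi> \<in> polys_over S" and "tail_in P 1 \<phi>"
  shows "poly \<phi> x - coeff \<phi> 0 \<in> P"
proof -
  have "\<phi> - [:coeff \<phi> 0:] \<in> polys_over S"
    using polys_over_closed(4,8)[OF subring] \<phi> coeff_polys_over by blast
  moreover have "tail_in P 0 (\<phi> - [:coeff \<phi> 0:])"
    using assms(2) P_0 unfolding tail_in_def by (auto simp: coeff_pCons split: nat.split)
  ultimately show ?thesis using poly_in_P by fastforce
qed

lemma pseudo_division_step:
  assumes G: "G \<in> polys_over S" "tail_in P (Suc L) G"
    and H: "H \<in> polys_over S" "tail_in P (Suc n) H" and "L \<le> n"
  shows "tail_in P n (smult (coeff G L) H - monom (coeff H n) (n - L) * G)"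
  unfolding tail_in_def
proof (intro allI impI)
  fix i assume i: "n \<le> i"
  have ci: "coeff (smult (coeff G L) H - monom (coeff H n) (n - L) * G) i
      = coeff G L * coeff H i - coeff H n * coeff G (i - (n - L))"
    using i \<open>L \<le> n\<close> by (simp add: coeff_monom_mult)
  show "coeff (smult (coeff G L) H - monom (coeff H n) (n - L) * G) i \<in> P"
  proof (cases "i = n")
    case True
    then show ?thesis using ci \<open>L \<le> n\<close> P_0 by (simp add: mult.commute)
  next
    case False
    then have "coeff H i \<in> P" "coeff G (i - (n - L)) \<in> P"
      using H(2) G(2) i \<open>L \<le> n\<close> unfolding tail_in_def by auto
    then show ?thesis
      unfolding ci using coeff_in_T[OF H(1)] coeff_in_T[OF G(1)] by (blast intro: P_diff P_mult_left)
  qed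
qed

text \<open>Pseudo-division modulo \<open>P\<close>: the leading coefficient of \<open>G\<close> modulo \<open>P\<close> need not be invertible,
  so \<open>H\<close> is first multiplied by a power of it.\<close>

lemma pseudo_divmod_mod:
  assumes G: "G \<in> polys_over S" "tail_in P (Suc L) G" and H: "H \<in> polys_over S"
  obtains k Q where "Q \<in> polys_over S" "tail_in P L (smult (coeff G L ^ k) H - Q * G)"
proof -
  let ?g = "coeff G L"
  have gS: "?g \<in> S" using G(1) coeff_polys_over by blast
  have "\<exists>k Q. Q \<in> polys_over S \<and> tail_in P L (smult (?g ^ k) H - Q * G)"
    if "H \<in> polys_over S" "tail_in P n H" for n H
    using that
  proof (induction n arbitrary: H)
    case (Suc n)
    show ?case
    proof (cases "L \<le> n")
      case True
      let ?q = "monom (coeff H n) (n - L)"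
      have q: "?q \<in> polys_over S"
        using Suc.prems(1) by (intro polys_over_closed(7)[OF subring] coeff_polys_over)
      have "smult ?g H - ?q * G \<in> polys_over S"
        using gS q G(1) Suc.prems(1) by (intro polys_over_closed(4-6)[OF subring])
      then obtain k Q where Q: "Q \<in> polys_over S"
        "tail_in P L (smult (?g ^ k) (smult ?g H - ?q * G) - Q * G)"
        using Suc.IH pseudo_division_step[OF G Suc.prems True] by blast
      have "smult (?g ^ k) (smult ?g H - ?q * G) - Q * G
          = smult (?g ^ Suc k) H - (smult (?g ^ k) ?q + Q) * G"
        by (simp add: smult_diff_right algebra_simps)
      moreover have "smult (?g ^ k) ?q + Q \<in> polys_over S"
        using subring_power[OF subring gS] q Q(1) by (intro polys_over_closed(3,6)[OF subring])
      ultimately show ?thesis using Q(2) by metis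
    qed (use Suc.prems(2) polys_over_closed(1)[OF subring]
        in \<open>intro exI[of _ 0], auto intro: tail_in_mono\<close>)
  qed (use polys_over_closed(1)[OF subring] tail_in_mono in \<open>intro exI[of _ 0], auto\<close>)
  then show ?thesis using that H tail_in_degree[OF P_0] by blast
qed

lemma ideal_in_contraction_plus:
  assumes "n \<in> S"
  shows "ideal_in S {y \<in> S. \<exists>s\<in>S. y - s * n \<in> P}"
  unfolding ideal_in_def
proof (intro conjI ballI subsetI)
  show "0 \<in> {y \<in> S. \<exists>s\<in>S. y - s * n \<in> P}"
    using subring_0[OF subring] P_0 by force
next
  fix y z assume "y \<in> {y \<in> S. \<exists>s\<in>S. y - s * n \<in> P}" "z \<in> {y \<in> S. \<exists>s\<in>S. y - s * n \<in> P}"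
  then obtain s1 s2 where "y \<in> S" "z \<in> S" "s1 \<in> S" "s2 \<in> S" "y - s1 * n \<in> P" "z - s2 * n \<in> P"
    by blast
  moreover have "(y + z) - (s1 + s2) * n = (y - s1 * n) + (z - s2 * n)" by (simp add: algebra_simps)
  ultimately have "y + z \<in> S" "s1 + s2 \<in> S" "(y + z) - (s1 + s2) * n \<in> P"
    using P_add subring_add[OF subring] by (metis, metis, metis)
  then show "y + z \<in> {y \<in> S. \<exists>s\<in>S. y - s * n \<in> P}" by blast
next
  fix r y assume "r \<in> S" "y \<in> {y \<in> S. \<exists>s\<in>S. y - s * n \<in> P}"
  then obtain s where "y \<in> S" "s \<in> S" "y - s * n \<in> P" by blast
  moreover have "r * y - (r * s) * n = r * (y - s * n)" by (simp add: algebra_simps)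
  ultimately have "r * y \<in> S" "r * s \<in> S" "r * y - (r * s) * n \<in> P"
    using \<open>r \<in> S\<close> P_mult_left S_subset_T subring_mult[OF subring] by auto
  then show "r * y \<in> {y \<in> S. \<exists>s\<in>S. y - s * n \<in> P}" by blast
qed simp

lemma ideal_in_contraction: "ideal_in S (P \<inter> S)"
proof -
  have "{y \<in> S. \<exists>s\<in>S. y - s * 0 \<in> P} = P \<inter> S" using subring_0[OF subring] by auto
  then show ?thesis using ideal_in_contraction_plus[OF subring_0[OF subring]] by simp
qed

end

locale prime_of_adjoin = ideal_of_adjoin +
  assumes prime: "prime_ideal_in (adjoin S x) P"
begin

lemma one_notin_P: "1 \<notin> P"
  using prime unfolding prime_ideal_in_def by blast

lemma coeff_mult_lead_mod:
  assumes f: "\<phi> \<in> polys_over S" "coeff \<phi> i \<notin> P" "tail_in P (Suc i) \<phi>"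
    and g: "\<psi> \<in> polys_over S" "coeff \<psi> j \<notin> P" "tail_in P (Suc j) \<psi>"
  shows "coeff (\<phi> * \<psi>) (i + j) \<notin> P" "tail_in P (Suc (i + j)) (\<phi> * \<psi>)"
proof -
  have cT: "coeff \<phi> k \<in> T" "coeff \<psi> k \<in> T" for k using f(1) g(1) coeff_in_T by auto
  have trm: "coeff \<phi> k * coeff \<psi> (n - k) \<in> P" if "k \<le> n" "k \<noteq> i \<or> n \<noteq> i + j" "n \<ge> i + j" for k n
  proof (cases "k > i")
    case True
    then have "coeff \<phi> k \<in> P" using f(3) unfolding tail_in_def by simp
    then show ?thesis using P_mult_right cT(2) by blast
  next
    case False
    then have "n - k > j" using that by auto
    then have "coeff \<psi> (n - k) \<in> P" using g(3) unfolding tail_in_def by simp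
    then show ?thesis using P_mult_left cT(1) by blast
  qed
  show "tail_in P (Suc (i + j)) (\<phi> * \<psi>)"
    unfolding tail_in_def coeff_mult by (intro allI impI P_sum trm) auto
  let ?rest = "\<Sum>k\<in>{..i+j} - {i}. coeff \<phi> k * coeff \<psi> (i + j - k)"
  have split: "coeff (\<phi> * \<psi>) (i + j) = coeff \<phi> i * coeff \<psi> j + ?rest"
    unfolding coeff_mult by (subst sum.remove[of _ i]) auto
  have rest: "?rest \<in> P"
    by (intro P_sum trm) auto
  show "coeff (\<phi> * \<psi>) (i + j) \<notin> P"
  proof
    assume "coeff (\<phi> * \<psi>) (i + j) \<in> P"
    then have "coeff \<phi> i * coeff \<psi> j \<in> P"
      using P_diff[OF _ rest] split by fastforce
    then show False using prime_ideal_in_mult[OF prime cT(1) cT(2) f(2) g(2)] by blast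
  qed
qed

lemma one_minus_mult_nontrivial:
  assumes A: "A \<in> polys_over S" "\<not> tail_in P 0 A"
    and B: "B \<in> polys_over S" "coeff B (Suc e) \<notin> P" "tail_in P (Suc (Suc e)) B"
  shows "\<not> tail_in P 0 (1 - A * B)"
proof
  assume trivial: "tail_in P 0 (1 - A * B)"
  obtain r where "coeff A r \<notin> P" "tail_in P (Suc r) A"
    using exists_lead_mod[OF A(2) P_0] .
  then have "coeff (A * B) (r + Suc e) \<notin> P"
    using coeff_mult_lead_mod(1)[OF A(1) _ _ B] by blast
  moreover have "coeff (1 - A * B) (r + Suc e) \<in> P"
    using trivial unfolding tail_in_def by blast
  ultimately show False using P_uminus by (force simp: coeff_1)
qed

text \<open>If \<open>x\<close> is transcendental over \<open>S\<close> modulo \<open>P\<close>, then \<open>T/P\<close> is a polynomial ring over a domain,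
  in which \<open>1 - f x\<close> has positive degree and so is not invertible.\<close>

lemma not_jac_mem_if_transcendental:
  assumes transc: "\<forall>\<phi>\<in>polys_over S. poly \<phi> x \<in> P \<longrightarrow> tail_in P 0 \<phi>"
    and f: "f \<in> T" "f \<notin> P"
  shows "\<not> jac_mem T P f"
proof
  assume "jac_mem T P f"
  then obtain t where t: "t \<in> T" "1 - t * (1 - f * x) \<in> P"
    using x_in_T unfolding jac_mem_def by blast
  obtain F where F: "F \<in> polys_over S" "f = poly F x" using f(1) by (rule adjoinE)
  obtain \<tau> where \<tau>: "\<tau> \<in> polys_over S" "t = poly \<tau> x" using t(1) by (rule adjoinE)
  define B where "B = 1 - pCons 0 F"
  have "pCons 0 F \<in> polys_over S"
    using F(1) subring_0[OF subring] unfolding polys_over_def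
    by (simp add: coeff_pCons split: nat.split)
  then have B: "B \<in> polys_over S"
    unfolding B_def using polys_over_closed(2,4)[OF subring] by blast
  obtain e where e: "coeff F e \<notin> P" "tail_in P (Suc e) F"
    using exists_lead_mod poly_in_P F f(2) P_0 by metis
  have coeff_B: "coeff B (Suc i) = - coeff F i" for i
    unfolding B_def by simp
  have "coeff B (Suc e) \<notin> P" "tail_in P (Suc (Suc e)) B"
    using e P_uminus unfolding coeff_B tail_in_def
    by (force, metis Suc_le_D Suc_le_mono coeff_B)
  moreover have "\<not> tail_in P 0 \<tau>"
  proof
    assume "tail_in P 0 \<tau>"
    then have "t * (1 - f * x) \<in> P"
      using poly_in_P[OF \<tau>(1)] \<tau>(2) f(1) x_in_T subring_T
      by (simp add: P_mult_right subring_closed)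
    then show False using P_diff_cancel[OF t(2)] one_notin_P by blast
  qed
  ultimately have "\<not> tail_in P 0 (1 - \<tau> * B)"
    using one_minus_mult_nontrivial \<tau>(1) B by blast
  moreover have "1 - \<tau> * B \<in> polys_over S" using B \<tau>(1) polys_over_closed[OF subring] by blast
  moreover have "poly (1 - \<tau> * B) x \<in> P"
    using t(2) unfolding \<tau>(2) F(2) B_def by (simp add: algebra_simps)
  ultimately show False using transc by blast
qed

end

text \<open>A relation is a polynomial over \<open>S\<close> whose value at \<open>x\<close> lies in \<open>P\<close>; it is trivial if all its
  coefficients lie in \<open>P\<close>.\<close>

locale minimal_relation = prime_of_adjoin +
  fixes m :: "'a poly" and L :: nat
  assumes m: "m \<in> polys_over S" and m_rel: "poly m x \<in> P"
    and lead: "coeff m L \<notin> P" and tail: "tail_in P (Suc L) m"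
    and minimal: "\<And>\<psi> n. \<psi> \<in> polys_over S \<Longrightarrow> poly \<psi> x \<in> P \<Longrightarrow> tail_in P n \<psi> \<Longrightarrow> n \<le> L
      \<Longrightarrow> tail_in P 0 \<psi>"

lemma (in prime_of_adjoin) exists_minimal_relation:
  assumes "\<phi> \<in> polys_over S" "poly \<phi> x \<in> P" "\<not> tail_in P 0 \<phi>"
  shows "\<exists>m L. minimal_relation S x P m L"
proof -
  define nontriv where
    "nontriv n \<longleftrightarrow> (\<exists>\<psi>\<in>polys_over S. poly \<psi> x \<in> P \<and> \<not> tail_in P 0 \<psi> \<and> tail_in P n \<psi>)" for n
  have "nontriv (Suc (degree \<phi>))"
    unfolding nontriv_def using assms tail_in_degree[OF P_0] by blast
  then have ex: "\<exists>n. nontriv n" by blast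
  define d where "d = (LEAST n. nontriv n)"
  obtain m where m: "m \<in> polys_over S" "poly m x \<in> P" "\<not> tail_in P 0 m" "tail_in P d m"
    using LeastI_ex[OF ex] unfolding d_def nontriv_def by blast
  then obtain L where L: "d = Suc L" by (cases d) auto
  have least: "\<not> nontriv n" if "n \<le> L" for n
    using not_less_Least[of n nontriv] that L unfolding d_def by simp
  have "coeff m L \<notin> P"
    using least[of L] m tail_in_Suc L unfolding nontriv_def by blast
  then have "minimal_relation S x P m L"
    using m L least unfolding nontriv_def by unfold_locales auto
  then show ?thesis by blast
qed

context minimal_relation
begin

lemma lead_in_S: "coeff m L \<in> S" and lead_in_T: "coeff m L \<in> T"
  using m coeff_polys_over coeff_in_T by blast+

lemma lead_power_notin_P: "coeff m L ^ k \<notin> P"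
  using prime_ideal_in_power[OF subring_T prime lead_in_T] lead by blast

lemma degree_pos: "L \<ge> 1"
proof (rule ccontr)
  assume "\<not> L \<ge> 1"
  then have "L = 0" by simp
  then have "tail_in P 1 m" using tail by simp
  then have "poly m x - coeff m 0 \<in> P" using poly_minus_coeff_0_in_P m by blast
  then have "poly m x - (poly m x - coeff m 0) \<in> P" by (rule P_diff[OF m_rel])
  then have "coeff m L \<in> P" using \<open>L = 0\<close> by simp
  then show False using lead by blast
qed

definition reducible_to :: "nat \<Rightarrow> 'a poly \<Rightarrow> bool" where
  "reducible_to n G \<longleftrightarrow> (\<exists>A B. A \<in> polys_over S \<and> B \<in> polys_over S \<and>
     poly (A * G + B * m) x \<notin> P \<and> tail_in P n (A * G + B * m))"

lemma reducible_toI: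
  "A \<in> polys_over S \<Longrightarrow> B \<in> polys_over S \<Longrightarrow> poly (A * G + B * m) x \<notin> P
    \<Longrightarrow> tail_in P n (A * G + B * m) \<Longrightarrow> reducible_to n G"
  unfolding reducible_to_def by blast

lemma reducible_toE:
  assumes "reducible_to n G"
  obtains A B where "A \<in> polys_over S" "B \<in> polys_over S" "poly (A * G + B * m) x \<notin> P"
    "tail_in P n (A * G + B * m)"
  using assms unfolding reducible_to_def by blast

lemma reducible_to_if_degree_ge:
  assumes G: "G \<in> polys_over S" "poly G x \<notin> P" "tail_in P (Suc E) G" and "L \<le> E"
  shows "reducible_to E G"
proof -
  obtain k Q where Q: "Q \<in> polys_over S" "tail_in P L (smult (coeff m L ^ k) G - Q * m)"
    using pseudo_divmod_mod[OF m tail G(1)] .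
  let ?c = "coeff m L ^ k"
  have "poly (smult ?c G - Q * m) x \<notin> P"
  proof
    assume "poly (smult ?c G - Q * m) x \<in> P"
    moreover have "poly Q x * poly m x \<in> P"
      using P_mult_left[OF poly_in_adjoin[OF Q(1)] m_rel] .
    ultimately have "?c * poly G x \<in> P" using P_add by fastforce
    then show False
      using prime_ideal_in_mult[OF prime subring_power[OF subring_T lead_in_T] poly_in_adjoin[OF G(1)]]
        lead_power_notin_P G(2) by blast
  qed
  moreover have "smult ?c G - Q * m = [:?c:] * G + (- Q) * m" by simp
  moreover have "[:?c:] \<in> polys_over S" "- Q \<in> polys_over S"
    using polys_over_closed(1,4,8)[OF subring] subring_power[OF subring lead_in_S] Q(1)
    by (metis diff_0)+
  ultimately show ?thesis
    unfolding reducible_to_def using tail_in_mono[OF Q(2) \<open>L \<le> E\<close>] by metis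
qed

text \<open>A multiple \<open>Q G\<close> of a relation \<open>Q\<close> cannot agree modulo \<open>P\<close> with a scaled copy of \<open>m\<close> when
  \<open>G\<close> has positive degree: \<open>Q\<close> would be a nontrivial relation of smaller degree than \<open>m\<close>.\<close>

lemma minimal_relation_not_multiple:
  assumes G: "G \<in> polys_over S" "coeff G E \<notin> P" "tail_in P (Suc E) G" "E \<ge> 1"
    and g: "g \<in> T" "g \<notin> P" and Q: "Q \<in> polys_over S" "poly Q x \<in> P"
    and R0: "tail_in P 0 (smult g m - Q * G)"
  shows False
proof -
  define R where "R = smult g m - Q * G"
  have R: "coeff R i \<in> P" for i using R0 unfolding R_def tail_in_def by blast
  have coeff_QG: "coeff (Q * G) i = g * coeff m i - coeff R i" for i
    unfolding R_def by simp
  have "\<not> tail_in P 0 Q"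
  proof
    assume "tail_in P 0 Q"
    then have "coeff (Q * G) L \<in> P"
      unfolding coeff_mult tail_in_def using coeff_in_T[OF G(1)] by (auto intro!: P_sum P_mult_right)
    then have "g * coeff m L \<in> P"
      using P_add[OF _ R[of L]] coeff_QG[of L] by fastforce
    then show False using prime_ideal_in_mult[OF prime g(1) lead_in_T g(2) lead] by blast
  qed
  then obtain j where j: "coeff Q j \<notin> P" "tail_in P (Suc j) Q" using exists_lead_mod P_0 by blast
  have QG: "coeff (Q * G) (j + E) \<notin> P"
    using coeff_mult_lead_mod(1)[OF Q(1) j G(1-3)] .
  have "j + E \<le> L"
  proof (rule ccontr)
    assume "\<not> j + E \<le> L"
    then have "g * coeff m (j + E) \<in> P"
      using tail P_mult_left[OF g(1)] unfolding tail_in_def by simp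
    then have "coeff (Q * G) (j + E) \<in> P"
      using P_diff[OF _ R[of "j + E"]] coeff_QG by simp
    then show False using QG by blast
  qed
  then have "tail_in P 0 Q" using minimal[OF Q j(2)] G(4) by simp
  then show False using \<open>\<not> tail_in P 0 Q\<close> by blast
qed

lemma reducible_to_if_degree_less:
  assumes G: "G \<in> polys_over S" "poly G x \<notin> P" "coeff G E \<notin> P" "tail_in P (Suc E) G"
    and "E < L" "E \<ge> 1"
  shows "reducible_to E G"
proof -
  obtain k Q where Q: "Q \<in> polys_over S" "tail_in P E (smult (coeff G E ^ k) m - Q * G)"
    using pseudo_divmod_mod[OF G(1,4) m] .
  let ?g = "coeff G E ^ k"
  define R where "R = smult ?g m - Q * G"
  have gS: "?g \<in> S" using subring_power[OF subring coeff_polys_over[OF G(1)]] .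
  have gT: "?g \<in> T" using subring_power[OF subring_T coeff_in_T[OF G(1)]] .
  have g: "?g \<notin> P" using prime_ideal_in_power[OF subring_T prime coeff_in_T[OF G(1)]] G(3) by blast
  have "poly R x \<notin> P"
  proof
    assume "poly R x \<in> P"
    moreover have "R \<in> polys_over S"
      unfolding R_def using gS G(1) Q(1) m by (intro polys_over_closed(4-6)[OF subring])
    ultimately have R0: "tail_in P 0 R" using minimal Q(2) \<open>E < L\<close> unfolding R_def by simp
    have "poly Q x * poly G x = ?g * poly m x - poly R x" unfolding R_def by simp
    then have "poly Q x * poly G x \<in> P"
      using P_diff[OF P_mult_left[OF gT m_rel] \<open>poly R x \<in> P\<close>] by simp
    then have "poly Q x \<in> P"
      using prime G(2) poly_in_adjoin Q(1) G(1) unfolding prime_ideal_in_def by blast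
    then show False
      using minimal_relation_not_multiple[OF G(1,3,4) \<open>E \<ge> 1\<close> gT g Q(1)] R0 unfolding R_def by blast
  qed
  moreover have "R = (- Q) * G + [:?g:] * m" unfolding R_def by simp
  moreover have "[:?g:] \<in> polys_over S" "- Q \<in> polys_over S"
    using polys_over_closed(1,4,8)[OF subring] gS Q(1) by (metis diff_0)+
  ultimately show ?thesis using reducible_toI Q(2) unfolding R_def by metis
qed

lemma reducible_to_combination:
  assumes "A \<in> polys_over S" "B \<in> polys_over S" "reducible_to n (A * G + B * m)"
  shows "reducible_to n G"
proof -
  obtain A' B' where AB': "A' \<in> polys_over S" "B' \<in> polys_over S"
    "poly (A' * (A * G + B * m) + B' * m) x \<notin> P" "tail_in P n (A' * (A * G + B * m) + B' * m)"
    using assms(3) by (rule reducible_toE)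
  have "A' * (A * G + B * m) + B' * m = (A' * A) * G + (A' * B + B') * m"
    by (simp add: algebra_simps)
  moreover have "A' * A \<in> polys_over S" "A' * B + B' \<in> polys_over S"
    using assms(1,2) AB'(1,2) by (meson polys_over_closed(3,5)[OF subring])+
  ultimately show ?thesis using AB'(3,4) reducible_toI by metis
qed

lemma reducible_to_Suc:
  assumes G: "G \<in> polys_over S" and "reducible_to (Suc (Suc n)) G"
  shows "reducible_to (Suc n) G"
proof -
  obtain A B where AB: "A \<in> polys_over S" "B \<in> polys_over S"
    "poly (A * G + B * m) x \<notin> P" "tail_in P (Suc (Suc n)) (A * G + B * m)"
    using assms(2) by (rule reducible_toE)
  let ?H = "A * G + B * m"
  have H: "?H \<in> polys_over S"
    using AB(1,2) G(1) m by (intro polys_over_closed(3,5)[OF subring])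
  have "reducible_to (Suc n) ?H"
  proof (cases "coeff ?H (Suc n) \<in> P")
    case True
    then have "tail_in P (Suc n) ?H" using AB(4) tail_in_Suc by blast
    then show ?thesis
      using AB(3) polys_over_closed(1,2)[OF subring] by (intro reducible_toI[of 1 0]) simp_all
  next
    case False
    then show ?thesis
      using reducible_to_if_degree_ge[OF H AB(3,4)] reducible_to_if_degree_less[OF H AB(3) False AB(4)]
      by fastforce
  qed
  then show ?thesis using reducible_to_combination AB(1,2) by blast
qed

lemma reducible_to_1:
  assumes G: "G \<in> polys_over S" "poly G x \<notin> P"
  shows "reducible_to 1 G"
proof -
  have "reducible_to (Suc n) G \<Longrightarrow> reducible_to 1 G" for n
    by (induction n) (auto dest: reducible_to_Suc[OF G(1)])
  moreover have "reducible_to (Suc (degree G)) G"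
    using G tail_in_degree[OF P_0, of G] polys_over_closed(1,2)[OF subring]
    by (intro reducible_toI[of 1 0]) simp_all
  ultimately show ?thesis by blast
qed

text \<open>Since \<open>T/P\<close> is algebraic over the domain \<open>S/(P \<inter> S)\<close>, every nonzero element of \<open>T/P\<close> divides a
  nonzero constant.\<close>

lemma divides_constant:
  assumes F: "F \<in> polys_over S" "poly F x \<notin> P"
  obtains g U where "g \<in> S" "g \<notin> P" "U \<in> polys_over S" "g - poly U x * poly F x \<in> P"
proof -
  obtain A B where AB: "A \<in> polys_over S" "B \<in> polys_over S"
    "poly (A * F + B * m) x \<notin> P" "tail_in P 1 (A * F + B * m)"
    using reducible_to_1[OF F] by (rule reducible_toE)
  let ?H = "A * F + B * m"
  have H: "?H \<in> polys_over S"
    using AB(1,2) F(1) m by (intro polys_over_closed(3,5)[OF subring])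
  have d: "poly ?H x - coeff ?H 0 \<in> P" using poly_minus_coeff_0_in_P[OF H AB(4)] .
  have "coeff ?H 0 \<notin> P" using P_add[OF d] AB(3) by force
  moreover have "coeff ?H 0 - poly A x * poly F x = poly B x * poly m x - (poly ?H x - coeff ?H 0)"
    by (simp add: algebra_simps)
  then have "coeff ?H 0 - poly A x * poly F x \<in> P"
    using P_diff[OF P_mult_left[OF poly_in_adjoin[OF AB(2)] m_rel] d] by simp
  ultimately show ?thesis using that coeff_polys_over[OF H] AB(1) by blast
qed

text \<open>Up to a power of its leading coefficient, every relation is a multiple of \<open>m\<close> modulo \<open>P\<close>: the
  remainder of pseudo-division is a relation of degree below \<open>L\<close>.\<close>

lemma relation_multiple_of_minimal:
  assumes \<Psi>: "\<Psi> \<in> polys_over S" "poly \<Psi> x \<in> P"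
  obtains k Q where "Q \<in> polys_over S" "tail_in P 0 (smult (coeff m L ^ k) \<Psi> - Q * m)"
proof -
  obtain k Q where Q: "Q \<in> polys_over S" "tail_in P L (smult (coeff m L ^ k) \<Psi> - Q * m)"
    using pseudo_divmod_mod[OF m tail \<Psi>(1)] .
  have "smult (coeff m L ^ k) \<Psi> - Q * m \<in> polys_over S"
    by (intro polys_over_closed(4-6)[OF subring] subring_power[OF subring lead_in_S] \<Psi>(1) Q(1) m)
  moreover have "poly (smult (coeff m L ^ k) \<Psi> - Q * m) x \<in> P"
    using P_mult_left[OF subring_power[OF subring_T lead_in_T] \<Psi>(2)]
      P_mult_left[OF poly_in_adjoin[OF Q(1)] m_rel] P_diff by simp
  ultimately show ?thesis using that Q minimal by blast
qed

text \<open>An element \<open>n\<close> of \<open>S\<close> invertible modulo \<open>P\<close> divides a power of the leading coefficient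
  modulo \<open>P \<inter> S\<close>: apply the previous lemma to the relation \<open>n \<tau> - 1\<close> given by an inverse \<open>\<tau>(x)\<close>, and
  read the result modulo the ideal \<open>a = S \<inter> (P + n S)\<close>.\<close>

lemma lead_power_in_ideal_plus_if_unit:
  assumes n: "n \<in> S" and t: "t \<in> T" "1 - t * n \<in> P"
  obtains j s where "s \<in> S" "coeff m L ^ j - s * n \<in> P"
proof -
  let ?c = "coeff m L"
  define a where "a = {y \<in> S. \<exists>s\<in>S. y - s * n \<in> P}"
  have a: "ideal_in S a" unfolding a_def using ideal_in_contraction_plus[OF n] .
  obtain \<tau> where \<tau>: "\<tau> \<in> polys_over S" "t = poly \<tau> x" using t(1) by (rule adjoinE)
  have "smult n \<tau> - 1 \<in> polys_over S" by (intro polys_over_closed[OF subring] n \<tau>(1))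
  moreover have "poly (smult n \<tau> - 1) x \<in> P"
    using P_uminus[OF t(2)] unfolding \<tau>(2) by (simp add: algebra_simps)
  ultimately obtain k Q where Q: "Q \<in> polys_over S"
    "tail_in P 0 (smult (?c ^ k) (smult n \<tau> - 1) - Q * m)"
    by (rule relation_multiple_of_minimal)
  define R where "R = smult (?c ^ k) (smult n \<tau> - 1) - Q * m"
  have R: "coeff R i \<in> P" for i using Q(2) unfolding R_def tail_in_def by blast
  have RS: "R \<in> polys_over S"
    unfolding R_def using subring_power[OF subring lead_in_S] n \<tau>(1) Q(1) m
    by (intro polys_over_closed[OF subring])
  have coeff_Qm: "coeff (Q * m) i = ?c ^ k * (n * coeff \<tau> i) - coeff R i - ?c ^ k * coeff 1 i" for i
    unfolding R_def by (simp add: algebra_simps)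
  have in_a: "?c ^ k * (n * coeff \<tau> i) - coeff R i \<in> a" for i
  proof -
    have "(?c ^ k * (n * coeff \<tau> i) - coeff R i) - (?c ^ k * coeff \<tau> i) * n = - coeff R i"
      by (simp add: algebra_simps)
    then have "(?c ^ k * (n * coeff \<tau> i) - coeff R i) - (?c ^ k * coeff \<tau> i) * n \<in> P"
      using P_uminus[OF R] by simp
    moreover have "?c ^ k * coeff \<tau> i \<in> S" "?c ^ k * (n * coeff \<tau> i) - coeff R i \<in> S"
      using n coeff_polys_over[OF \<tau>(1)] coeff_polys_over[OF RS] subring_power[OF subring lead_in_S]
      by (auto intro!: subring_mult[OF subring] subring_diff[OF subring])
    ultimately show ?thesis unfolding a_def by blast
  qed
  have "P \<inter> S \<subseteq> a" unfolding a_def using subring_0[OF subring] by force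
  then have "tail_in a (Suc L) m" using tail m coeff_polys_over unfolding tail_in_def by blast
  moreover have "coeff (Q * m) i \<in> a" if "i \<ge> 1" for i
    using in_a[of i] coeff_Qm[of i] that by (simp add: coeff_1)
  moreover have "coeff (Q * m) 0 + ?c ^ k \<in> a"
    using in_a[of 0] coeff_Qm[of 0] by simp
  ultimately obtain j where "?c ^ j \<in> a"
    using lead_power_in_ideal_if_mult_const[OF subring a m(1) _ degree_pos Q(1)] by blast
  then show ?thesis using that unfolding a_def by blast
qed

lemma not_jac_mem_if_algebraic:
  assumes J: "jacobson S" and f: "f \<in> T" "f \<notin> P"
  shows "\<not> jac_mem T P f"
proof
  assume jac: "jac_mem T P f"
  let ?c = "coeff m L"
  obtain F where F: "F \<in> polys_over S" "f = poly F x" using f(1) by (rule adjoinE)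
  obtain g U where g: "g \<in> S" "g \<notin> P" "U \<in> polys_over S" "g - poly U x * f \<in> P"
    using divides_constant F f(2) by metis
  have jac_g: "jac_mem T P g"
    using jac_mem_congruent_multiple[OF subring_T ideal jac poly_in_adjoin[OF g(3)] g(4)] .
  define h where "h = g * ?c"
  have h: "h \<in> S" "h \<notin> P"
    unfolding h_def using subring_mult[OF subring g(1) lead_in_S]
      prime_ideal_in_mult[OF prime _ lead_in_T g(2) lead] S_subset_T g(1) by blast+
  have "\<not> (\<exists>k. h ^ k \<in> P \<inter> S)"
    using prime_ideal_in_power[OF subring_T prime] h S_subset_T by blast
  then have "\<not> jac_mem S (P \<inter> S) h"
    using J ideal_in_contraction h(1) unfolding jacobson_def by blast
  then obtain b where b: "b \<in> S" "\<And>t. t \<in> S \<Longrightarrow> 1 - t * (1 - h * b) \<notin> P \<inter> S"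
    unfolding jac_mem_def by blast
  define n where "n = 1 - h * b"
  have n: "n \<in> S" unfolding n_def by (intro subring_closed[OF subring] h(1) b(1))
  have "?c * b \<in> T" using lead_in_S b(1) S_subset_T subring_mult[OF subring] by blast
  then obtain t where "t \<in> T" "1 - t * (1 - g * (?c * b)) \<in> P"
    using jac_g unfolding jac_mem_def by blast
  then obtain j s where s: "s \<in> S" "?c ^ j - s * n \<in> P"
    using lead_power_in_ideal_plus_if_unit[OF n] unfolding n_def h_def by (metis mult.assoc)
  have "?c ^ j - s * n \<in> P \<inter> S"
    using s(2) by (simp add: subring_closed[OF subring] s(1) lead_in_S n)
  moreover have "1 - n = ?c * (g * b)" unfolding n_def h_def by (simp add: algebra_simps)
  ultimately obtain t' where "t' \<in> S" "1 - t' * n \<in> P \<inter> S"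
    using unit_mod_ideal_if_power_in[OF subring ideal_in_contraction n _ s(1)]
      subring_mult[OF subring g(1) b(1)] by blast
  then show False using b(2) unfolding n_def by blast
qed

end

lemma (in prime_of_adjoin) not_jac_mem:
  assumes "jacobson S" "f \<in> T" "f \<notin> P"
  shows "\<not> jac_mem T P f"
proof (cases "\<forall>\<phi>\<in>polys_over S. poly \<phi> x \<in> P \<longrightarrow> tail_in P 0 \<phi>")
  case True
  then show ?thesis using not_jac_mem_if_transcendental assms(2,3) by blast
next
  case False
  then obtain m L where "minimal_relation S x P m L"
    using exists_minimal_relation by blast
  then show ?thesis using minimal_relation.not_jac_mem_if_algebraic assms by blast
qed

lemma ideal_in_Union_chain:
  assumes "C \<noteq> {}" "\<And>J. J \<in> C \<Longrightarrow> ideal_in R J" "\<And>J K. J \<in> C \<Longrightarrow> K \<in> C \<Longrightarrow> J \<subseteq> K \<or> K \<subseteq> J"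
  shows "ideal_in R (\<Union>C)"
  unfolding ideal_in_def
proof (intro conjI ballI)
  show "\<Union>C \<subseteq> R" using assms(2) ideal_in_subset by blast
  show "0 \<in> \<Union>C" using assms(1,2) ideal_in_0 by blast
next
  fix u v assume "u \<in> \<Union>C" "v \<in> \<Union>C"
  then obtain J K where "J \<in> C" "K \<in> C" "u \<in> J" "v \<in> K" by blast
  then show "u + v \<in> \<Union>C"
    using assms(3)[of J K] assms(2) ideal_in_add by blast
next
  fix s u assume "s \<in> R" "u \<in> \<Union>C"
  then show "s * u \<in> \<Union>C" using assms(2) ideal_in_mult_left by blast
qed

lemma ideal_in_add_multiples:
  assumes R: "subring R" and M: "ideal_in R M" and y: "y \<in> R"
  shows "ideal_in R {m + t * y | m t. m \<in> M \<and> t \<in> R}"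
  unfolding ideal_in_def
proof (intro conjI ballI)
  show "{m + t * y | m t. m \<in> M \<and> t \<in> R} \<subseteq> R"
    using ideal_in_subset[OF M] subring_closed[OF R] y by blast
  show "0 \<in> {m + t * y | m t. m \<in> M \<and> t \<in> R}"
    using ideal_in_0[OF M] subring_0[OF R] by force
next
  fix u v assume "u \<in> {m + t * y | m t. m \<in> M \<and> t \<in> R}" "v \<in> {m + t * y | m t. m \<in> M \<and> t \<in> R}"
  then obtain m1 t1 m2 t2 where "u = m1 + t1 * y" "v = m2 + t2 * y" "m1 \<in> M" "m2 \<in> M" "t1 \<in> R" "t2 \<in> R"
    by blast
  moreover have "m1 + t1 * y + (m2 + t2 * y) = (m1 + m2) + (t1 + t2) * y" by (simp add: algebra_simps)
  ultimately show "u + v \<in> {m + t * y | m t. m \<in> M \<and> t \<in> R}"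
    using ideal_in_add[OF M] subring_add[OF R] by blast
next
  fix s u assume s: "s \<in> R" and "u \<in> {m + t * y | m t. m \<in> M \<and> t \<in> R}"
  then obtain m1 t1 where "u = m1 + t1 * y" "m1 \<in> M" "t1 \<in> R" by blast
  moreover have "s * (m1 + t1 * y) = s * m1 + (s * t1) * y" by (simp add: algebra_simps)
  ultimately show "s * u \<in> {m + t * y | m t. m \<in> M \<and> t \<in> R}"
    using ideal_in_mult_left[OF M s] subring_mult[OF R s] by blast
qed

lemma exists_ideal_maximal_avoiding_powers:
  assumes I: "ideal_in R I" and a: "\<And>k. a ^ k \<notin> I"
  obtains M where "ideal_in R M" "I \<subseteq> M" "\<And>k. a ^ k \<notin> M"
    "\<And>J. ideal_in R J \<Longrightarrow> M \<subseteq> J \<Longrightarrow> (\<And>k. a ^ k \<notin> J) \<Longrightarrow> J = M"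
proof -
  define \<A> where "\<A> = {J. ideal_in R J \<and> I \<subseteq> J \<and> (\<forall>k. a ^ k \<notin> J)}"
  have "\<exists>M\<in>\<A>. \<forall>J\<in>\<A>. M \<subseteq> J \<longrightarrow> J = M"
  proof (rule Zorn_Lemma2, intro ballI)
    fix C assume C: "C \<in> chains \<A>"
    show "\<exists>U\<in>\<A>. \<forall>J\<in>C. J \<subseteq> U"
    proof (cases "C = {}")
      case True
      then show ?thesis using I a unfolding \<A>_def by blast
    next
      case False
      have "C \<subseteq> \<A>" and "\<And>J K. J \<in> C \<Longrightarrow> K \<in> C \<Longrightarrow> J \<subseteq> K \<or> K \<subseteq> J"
        using C unfolding chains_def chain_subset_def by blast+
      then have "\<Union>C \<in> \<A>"
        using ideal_in_Union_chain[OF False] False unfolding \<A>_def by blast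
      then show ?thesis by blast
    qed
  qed
  then obtain M where "M \<in> \<A>" and max: "\<And>J. J \<in> \<A> \<Longrightarrow> M \<subseteq> J \<Longrightarrow> J = M" by blast
  show ?thesis
  proof (rule that)
    show "ideal_in R M" "I \<subseteq> M" "\<And>k. a ^ k \<notin> M" using \<open>M \<in> \<A>\<close> unfolding \<A>_def by auto
    show "J = M" if "ideal_in R J" "M \<subseteq> J" "\<And>k. a ^ k \<notin> J" for J
      using max[of J] that \<open>I \<subseteq> M\<close> unfolding \<A>_def by blast
  qed
qed

lemma prime_if_maximal_avoiding_powers:
  assumes R: "subring R" and M: "ideal_in R M" and a: "\<And>k. a ^ k \<notin> M"
    and maximal: "\<And>J. ideal_in R J \<Longrightarrow> M \<subseteq> J \<Longrightarrow> (\<And>k. a ^ k \<notin> J) \<Longrightarrow> J = M"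
  shows "prime_ideal_in R M"
  unfolding prime_ideal_in_def
proof (intro conjI ballI impI)
  show "1 \<notin> M" using a[of 0] by simp
  have power_in_sum: "\<exists>i m t. a ^ i = m + t * y \<and> m \<in> M \<and> t \<in> R" if "y \<in> R" "y \<notin> M" for y
  proof (rule ccontr)
    let ?J = "{m + t * y | m t. m \<in> M \<and> t \<in> R}"
    assume "\<nexists>i m t. a ^ i = m + t * y \<and> m \<in> M \<and> t \<in> R"
    then have "\<And>k. a ^ k \<notin> ?J" by blast
    moreover have "M \<subseteq> ?J" using subring_0[OF R] by force
    ultimately have "?J = M" using maximal ideal_in_add_multiples[OF R M that(1)] by blast
    moreover have "y \<in> ?J" using ideal_in_0[OF M] subring_1[OF R] by force
    ultimately show False using that(2) by blast
  qed
  fix y z assume yz: "y \<in> R" "z \<in> R" "y * z \<in> M"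
  show "y \<in> M \<or> z \<in> M"
  proof (rule ccontr)
    assume "\<not> (y \<in> M \<or> z \<in> M)"
    then obtain i j m1 t1 m2 t2 where h: "a ^ i = m1 + t1 * y" "m1 \<in> M" "t1 \<in> R"
      "a ^ j = m2 + t2 * z" "m2 \<in> M" "t2 \<in> R"
      using power_in_sum yz by meson
    have "m1 \<in> R" "m2 \<in> R" using h ideal_in_subset[OF M] by blast+
    have "a ^ (i + j) = m1 * (m2 + t2 * z) + m2 * (t1 * y) + (t1 * t2) * (y * z)"
      unfolding power_add h by (simp add: algebra_simps)
    also have "\<dots> \<in> M"
      using h yz \<open>m2 \<in> R\<close> ideal_in_mult_right[OF M] ideal_in_mult_left[OF M]
      by (intro ideal_in_add[OF M]) (simp_all add: subring_closed[OF R])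
    finally show False using a by blast
  qed
qed (use M in simp)

lemma exists_prime_ideal_avoiding_powers:
  assumes "subring R" "ideal_in R I" "\<And>k. a ^ k \<notin> I"
  obtains P where "prime_ideal_in R P" "I \<subseteq> P" "a \<notin> P"
proof -
  obtain M where "ideal_in R M" "I \<subseteq> M" "\<And>k. a ^ k \<notin> M"
    "\<And>J. ideal_in R J \<Longrightarrow> M \<subseteq> J \<Longrightarrow> (\<And>k. a ^ k \<notin> J) \<Longrightarrow> J = M"
    using exists_ideal_maximal_avoiding_powers[OF assms(2,3)] by blast
  then show ?thesis
    using that prime_if_maximal_avoiding_powers[OF assms(1)] power_one_right by metis
qed

theorem jacobson_adjoin:
  assumes S: "subring S" and J: "jacobson S"
  shows "jacobson (adjoin S x)"
  unfolding jacobson_def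
proof (intro allI impI)
  fix I a assume "ideal_in (adjoin S x) I \<and> a \<in> adjoin S x \<and> jac_mem (adjoin S x) I a"
  then have I: "ideal_in (adjoin S x) I" and a: "a \<in> adjoin S x" and jac: "jac_mem (adjoin S x) I a"
    by auto
  show "\<exists>k. a ^ k \<in> I"
  proof (rule ccontr)
    assume "\<nexists>k. a ^ k \<in> I"
    then obtain P where P: "prime_ideal_in (adjoin S x) P" "I \<subseteq> P" "a \<notin> P"
      using exists_prime_ideal_avoiding_powers[OF subring_adjoin[OF S] I] by blast
    then interpret prime_of_adjoin S x P
      using S by unfold_locales (simp_all add: prime_ideal_in_def)
    have "jac_mem T P a" using jac P(2) unfolding jac_mem_def by blast
    then show False using not_jac_mem[OF J a P(3)] by blast
  qed
qed

lemma ideal_genI: "finite F \<Longrightarrow> F \<subseteq> U \<Longrightarrow> (\<And>u. u \<in> F \<Longrightarrow> c u \<in> S) \<Longrightarrow> (\<Sum>u\<in>F. c u * u) \<in> ideal_gen S U"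
  unfolding ideal_gen_def by blast

lemma ideal_genE:
  assumes "y \<in> ideal_gen S U"
  obtains F c where "finite F" "F \<subseteq> U" "\<forall>u\<in>F. c u \<in> S" "y = (\<Sum>u\<in>F. c u * u)"
  using assms unfolding ideal_gen_def by blast

lemma sum_extend_coeffs:
  fixes c :: "'a \<Rightarrow> 'a::comm_ring_1"
  shows "finite G \<Longrightarrow> (\<Sum>u\<in>F \<union> G. (if u \<in> F then c u else 0) * u) = (\<Sum>u\<in>F. c u * u)"
proof (cases "finite F")
  case True
  assume "finite G"
  have "(\<Sum>u\<in>F \<union> G. (if u \<in> F then c u else 0) * u) = (\<Sum>u\<in>F \<union> G. if u \<in> F then c u * u else 0)"
    by (rule sum.cong) auto
  also have "\<dots> = (\<Sum>u\<in>(F \<union> G) \<inter> F. c u * u)"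
    using True \<open>finite G\<close> by (intro sum.inter_restrict[symmetric]) simp
  finally show ?thesis by (simp add: Int_absorb1)
qed simp

lemma ideal_in_ideal_gen:
  assumes S: "subring S" and U: "U \<subseteq> S"
  shows "ideal_in S (ideal_gen S U)"
  unfolding ideal_in_def
proof (intro conjI ballI subsetI)
  fix y assume "y \<in> ideal_gen S U"
  then show "y \<in> S"
    using U by (elim ideal_genE) (auto intro!: subring_sum[OF S] subring_mult[OF S])
next
  show "0 \<in> ideal_gen S U" using ideal_genI[of "{}"] by simp
next
  fix y z assume y: "y \<in> ideal_gen S U" and z: "z \<in> ideal_gen S U"
  obtain F1 c1 where h1: "finite F1" "F1 \<subseteq> U" "\<forall>u\<in>F1. c1 u \<in> S"
    "y = (\<Sum>u\<in>F1. c1 u * u)"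
    using y by (rule ideal_genE)
  obtain F2 c2 where h2: "finite F2" "F2 \<subseteq> U" "\<forall>u\<in>F2. c2 u \<in> S"
    "z = (\<Sum>u\<in>F2. c2 u * u)"
    using z by (rule ideal_genE)
  note h = h1 h2
  let ?c = "\<lambda>u. (if u \<in> F1 then c1 u else 0) + (if u \<in> F2 then c2 u else 0)"
  have "y + z = (\<Sum>u\<in>F1 \<union> F2. ?c u * u)"
    using sum_extend_coeffs[of F2 F1 c1] sum_extend_coeffs[of F1 F2 c2] h(1,4,5,8)
    by (simp add: distrib_right sum.distrib Un_commute)
  also have "\<dots> \<in> ideal_gen S U"
    using h subring_0[OF S] by (intro ideal_genI) (auto intro: subring_add[OF S])
  finally show "y + z \<in> ideal_gen S U" .
next
  fix s y assume "s \<in> S" and y: "y \<in> ideal_gen S U"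
  obtain F c where h: "finite F" "F \<subseteq> U" "\<forall>u\<in>F. c u \<in> S" "y = (\<Sum>u\<in>F. c u * u)"
    using y by (rule ideal_genE)
  have "s * y = (\<Sum>u\<in>F. (s * c u) * u)" unfolding h(4) by (simp add: sum_distrib_left mult.assoc)
  also have "\<dots> \<in> ideal_gen S U"
    using h \<open>s \<in> S\<close> by (intro ideal_genI) (auto intro: subring_mult[OF S])
  finally show "s * y \<in> ideal_gen S U" .
qed

lemma generator_in_ideal_gen:
  assumes "subring S" "u \<in> U"
  shows "u \<in> ideal_gen S U"
proof -
  have "(\<Sum>v\<in>{u}. 1 * v) \<in> ideal_gen S U"
    using assms subring_1 by (intro ideal_genI) auto
  then show ?thesis by simp
qed

lemma ideal_gen_subset:
  assumes "ideal_in S I"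
  shows "ideal_gen S I \<subseteq> I"
proof
  fix y assume "y \<in> ideal_gen S I"
  then obtain F c where "F \<subseteq> I" "\<forall>u\<in>F. c u \<in> S" "y = (\<Sum>u\<in>F. c u * u)"
    by (rule ideal_genE)
  then show "y \<in> I" using assms by (auto intro!: ideal_in_sum ideal_in_mult_left)
qed

lemma ideal_gen_mono: "U \<subseteq> V \<Longrightarrow> ideal_gen S U \<subseteq> ideal_gen S V"
  unfolding ideal_gen_def by blast

lemma ideal_gen_ideal: "subring S \<Longrightarrow> ideal_in S I \<Longrightarrow> ideal_gen S I = I"
  using ideal_gen_subset generator_in_ideal_gen by blast

lemma jac_mem_iff_jac_rad:
  assumes S: "subring S" and I: "ideal_in S I" and a: "a \<in> S"
  shows "jac_mem S I a \<longleftrightarrow> a \<in> jac_rad S I"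
proof -
  have "1 \<in> ideal_gen S (I \<union> {v}) \<longleftrightarrow> (\<exists>t\<in>S. 1 - t * v \<in> I)" if v: "v \<in> S" for v
  proof
    assume "1 \<in> ideal_gen S (I \<union> {v})"
    then obtain F c where h: "finite F" "F \<subseteq> I \<union> {v}" "\<forall>u\<in>F. c u \<in> S" "1 = (\<Sum>u\<in>F. c u * u)"
      by (rule ideal_genE)
    let ?t = "if v \<in> F then c v else 0"
    have "1 - ?t * v = (\<Sum>u\<in>F - {v}. c u * u)"
      unfolding h(4) using h(1) by (simp add: sum.remove)
    also have "\<dots> \<in> I" using h by (intro ideal_in_sum[OF I] ideal_in_mult_left[OF I]) auto
    finally show "\<exists>t\<in>S. 1 - t * v \<in> I" using h(3) subring_0[OF S] by (metis (full_types))
  next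
    assume "\<exists>t\<in>S. 1 - t * v \<in> I"
    then obtain t where "t \<in> S" "1 - t * v \<in> I" by blast
    moreover have G: "ideal_in S (ideal_gen S (I \<union> {v}))"
      using ideal_in_ideal_gen[OF S] ideal_in_subset[OF I] v by simp
    ultimately have "(1 - t * v) + t * v \<in> ideal_gen S (I \<union> {v})"
      using generator_in_ideal_gen[OF S]
      by (intro ideal_in_add[OF G] ideal_in_mult_left[OF G]) auto
    then show "1 \<in> ideal_gen S (I \<union> {v})" by simp
  qed
  then show ?thesis
    unfolding jac_mem_def jac_rad_def using a subring_closed[OF S] by auto
qed

lemma fin_jacobson_if_jacobson:
  assumes S: "subring S" and J: "jacobson S"
  shows "fin_jacobson S"
  unfolding fin_jacobson_def
proof (intro allI impI subsetI)
  fix I a assume "fg_ideal S I" and a: "a \<in> jac_rad S I"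
  then have I: "ideal_in S I"
    unfolding fg_ideal_def using ideal_in_ideal_gen[OF S] by blast
  have aS: "a \<in> S" using a unfolding jac_rad_def by blast
  then obtain k where "a ^ k \<in> I"
    using J I a jac_mem_iff_jac_rad[OF S I aS] unfolding jacobson_def by blast
  then show "a \<in> nil_rad S I"
    unfolding nil_rad_def using aS ideal_gen_ideal[OF S I] by blast
qed

lemma subring_UNIV: "subring UNIV"
  unfolding subring_def by simp

text \<open>Classically a Noetherian ring in the sense of ascending chains of finitely generated ideals has
  only finitely generated ideals: otherwise choice yields a strictly ascending chain.\<close>

lemma fg_ideal_if_noetherian:
  assumes N: "noetherian (UNIV :: 'a::comm_ring_1 set)" and I: "ideal_in UNIV (I :: 'a set)"
  shows "fg_ideal UNIV I"
proof (rule ccontr)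
  assume not_fg: "\<not> fg_ideal UNIV I"
  have step: "\<exists>y. y \<in> I \<and> y \<notin> ideal_gen UNIV F" if "finite F" "F \<subseteq> I" for F
  proof -
    have "ideal_gen UNIV F \<subseteq> I" using ideal_gen_mono[OF that(2)] ideal_gen_subset[OF I] by blast
    then show ?thesis using not_fg that unfolding fg_ideal_def by blast
  qed
  define new where "new F = (SOME y. y \<in> I \<and> y \<notin> ideal_gen UNIV F)" for F
  define gens where "gens k = ((\<lambda>F. insert (new F) F) ^^ k) {}" for k
  have gens: "finite (gens k) \<and> gens k \<subseteq> I" for k
  proof (induction k)
    case (Suc k)
    then show ?case using someI_ex[OF step[of "gens k"]] unfolding gens_def new_def by simp
  qed (simp add: gens_def)
  have new: "new (gens k) \<in> I - ideal_gen UNIV (gens k)" for k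
    using someI_ex[OF step] gens unfolding new_def by blast
  define J where "J k = ideal_gen UNIV (gens k)" for k
  have "\<forall>k. fg_ideal UNIV (J k)" unfolding J_def fg_ideal_def using gens by blast
  moreover have "\<forall>k. J k \<subseteq> J (Suc k)"
    unfolding J_def gens_def by (auto intro: ideal_gen_mono[THEN subsetD])
  ultimately obtain k where k: "J k = J (Suc k)" using N unfolding noetherian_def by blast
  have "new (gens k) \<in> J (Suc k)"
    unfolding J_def gens_def by (simp add: generator_in_ideal_gen[OF subring_UNIV])
  then show False using new[of k] k unfolding J_def by blast
qed

lemma jacobson_if_noetherian_fin_jacobson:
  assumes N: "noetherian (UNIV :: 'a::comm_ring_1 set)" and FJ: "fin_jacobson (UNIV :: 'a set)"
  shows "jacobson (UNIV :: 'a set)"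
  unfolding jacobson_def
proof (intro allI impI)
  fix I :: "'a set" and a assume "ideal_in UNIV I \<and> a \<in> UNIV \<and> jac_mem UNIV I a"
  then have I: "ideal_in UNIV I" and "a \<in> jac_rad UNIV I"
    using jac_mem_iff_jac_rad[OF subring_UNIV] by auto
  then have "a \<in> nil_rad UNIV I"
    using FJ fg_ideal_if_noetherian[OF N I] unfolding fin_jacobson_def by blast
  then show "\<exists>k. a ^ k \<in> I"
    unfolding nil_rad_def using ideal_gen_ideal[OF subring_UNIV I] by simp
qed

lemma jacobson_range_hom:
  fixes h :: "'a::comm_ring_1 \<Rightarrow> 'b::comm_ring_1"
  assumes J: "jacobson (UNIV :: 'a set)"
    and add: "\<And>y z. h (y + z) = h y + h z" and mult: "\<And>y z. h (y * z) = h y * h z" and one: "h 1 = 1"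
  shows "jacobson (range h)"
  unfolding jacobson_def
proof (intro allI impI)
  have zero: "h 0 = 0" using add[of 0 0] by simp
  have diff: "h (y - z) = h y - h z" for y z using add[of "y - z" z] by (simp add: algebra_simps)
  have power: "h (y ^ k) = h y ^ k" for y k by (induction k) (simp_all add: one mult)
  fix I a assume "ideal_in (range h) I \<and> a \<in> range h \<and> jac_mem (range h) I a"
  then have I: "ideal_in (range h) I" and a: "a \<in> range h" and jac: "jac_mem (range h) I a" by auto
  obtain a' where a': "a = h a'" using a by blast
  have "ideal_in UNIV (h -` I)"
    using I zero unfolding ideal_in_def by (auto simp: add mult)
  moreover have "jac_mem UNIV (h -` I) a'"
    unfolding jac_mem_def
  proof
    fix b
    obtain t where "t \<in> range h" "1 - t * (1 - a * h b) \<in> I" using jac unfolding jac_mem_def by blast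
    then show "\<exists>t\<in>UNIV. 1 - t * (1 - a' * b) \<in> h -` I" unfolding a' by (auto simp: diff mult one)
  qed
  ultimately obtain k where "a' ^ k \<in> h -` I" using J unfolding jacobson_def by blast
  then show "\<exists>k. a ^ k \<in> I" unfolding a' by (auto simp: power)
qed

type_synonym 'a mpoly = "((nat, nat) poly_mapping, 'a) poly_mapping"

lemma mpolysI:
  "(\<And>mon i. mon \<in> Poly_Mapping.keys p \<Longrightarrow> i \<in> Poly_Mapping.keys mon \<Longrightarrow> i < n) \<Longrightarrow> p \<in> mpolys n"
  unfolding mpolys_def by blast

lemma mpolysD: "p \<in> mpolys n \<Longrightarrow> mon \<in> Poly_Mapping.keys p \<Longrightarrow> i \<in> Poly_Mapping.keys mon \<Longrightarrow> i < n"
  unfolding mpolys_def by blast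

lemma subring_mpolys: "subring (mpolys n :: 'a::comm_ring_1 mpoly set)"
  unfolding subring_def
proof (intro conjI ballI)
  fix p q :: "'a mpoly" assume p: "p \<in> mpolys n" and q: "q \<in> mpolys n"
  have "r \<in> mpolys n" if "Poly_Mapping.keys r \<subseteq> Poly_Mapping.keys p \<union> Poly_Mapping.keys q"
    for r :: "'a mpoly"
    using that mpolysD[OF p] mpolysD[OF q] by (intro mpolysI) blast
  then show "p + q \<in> mpolys n" "p - q \<in> mpolys n"
    using keys_add[of p q] keys_diff[of p q] by blast+
  show "p * q \<in> mpolys n"
  proof (rule mpolysI)
    fix mon i assume "mon \<in> Poly_Mapping.keys (p * q)" and i: "i \<in> Poly_Mapping.keys mon"
    then obtain a b where "mon = a + b" "a \<in> Poly_Mapping.keys p" "b \<in> Poly_Mapping.keys q"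
      using keys_mult[of p q] by blast
    moreover have "i \<in> Poly_Mapping.keys a \<union> Poly_Mapping.keys b"
      using i keys_add[of a b] \<open>mon = a + b\<close> by blast
    ultimately show "i < n" using mpolysD[OF p] mpolysD[OF q] by blast
  qed
qed (simp_all add: mpolys_def)

lemma mpolys_mono: "m \<le> n \<Longrightarrow> mpolys m \<subseteq> mpolys n"
  by (auto intro!: mpolysI dest: mpolysD)

lemma mpolys_0_eq_single:
  assumes "p \<in> mpolys 0"
  shows "p = Poly_Mapping.single 0 (Poly_Mapping.lookup p 0)"
proof (rule poly_mapping_eqI)
  fix k :: "(nat, nat) poly_mapping"
  have "k \<in> Poly_Mapping.keys p \<Longrightarrow> k = 0"
    using mpolysD[OF assms] keys_eq_empty[of k] by blast
  then show "Poly_Mapping.lookup p k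
      = Poly_Mapping.lookup (Poly_Mapping.single 0 (Poly_Mapping.lookup p 0)) k"
    by (cases "k = 0") (auto simp: in_keys_iff lookup_single)
qed

lemma mpolys_0:
  "(mpolys 0 :: 'a::comm_ring_1 mpoly set) = range (Poly_Mapping.single 0)"
  using mpolys_0_eq_single by (auto intro!: mpolysI split: if_splits)

definition mvar :: "nat \<Rightarrow> 'a::comm_ring_1 mpoly" where
  "mvar n = Poly_Mapping.single (Poly_Mapping.single n 1) 1"

lemma mvar_in_mpolys: "mvar n \<in> mpolys (Suc n)"
  unfolding mvar_def mpolys_def by simp

lemma mvar_power: "mvar n ^ k = Poly_Mapping.single (Poly_Mapping.single n k) (1::'a::comm_ring_1)"
  by (induction k) (simp_all add: mvar_def mult_single single_add[symmetric])

lemma sum_single_keys: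
  "(\<Sum>mon\<in>Poly_Mapping.keys p. Poly_Mapping.single mon (Poly_Mapping.lookup p mon)) = p"
proof (rule poly_mapping_eqI)
  fix k
  have "Poly_Mapping.lookup (\<Sum>mon\<in>Poly_Mapping.keys p. Poly_Mapping.single mon (Poly_Mapping.lookup p mon)) k
      = (\<Sum>mon\<in>Poly_Mapping.keys p. if mon = k then Poly_Mapping.lookup p mon else 0)"
    unfolding lookup_sum by (rule sum.cong) (auto simp: lookup_single when_def)
  also have "\<dots> = Poly_Mapping.lookup p k"
    by (simp add: sum.delta in_keys_iff)
  finally show "Poly_Mapping.lookup (\<Sum>mon\<in>Poly_Mapping.keys p. Poly_Mapping.single mon (Poly_Mapping.lookup p mon)) k
      = Poly_Mapping.lookup p k" .
qed

lemma single_split_last: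
  fixes mon :: "(nat, nat) poly_mapping"
  shows "Poly_Mapping.single mon c
    = Poly_Mapping.single (mon - Poly_Mapping.single n (Poly_Mapping.lookup mon n)) c
      * mvar n ^ Poly_Mapping.lookup mon n"
proof -
  have "mon = (mon - Poly_Mapping.single n (Poly_Mapping.lookup mon n))
      + Poly_Mapping.single n (Poly_Mapping.lookup mon n)"
    by (rule poly_mapping_eqI) (simp add: lookup_add lookup_minus lookup_single when_def)
  then show ?thesis unfolding mvar_power mult_single by simp
qed

lemma mpolys_Suc: "mpolys (Suc n) = adjoin (mpolys n) (mvar n)"
proof
  let ?S = "mpolys n :: 'a::comm_ring_1 mpoly set"
  have T: "subring (adjoin ?S (mvar n))" using subring_adjoin[OF subring_mpolys] .
  show "adjoin ?S (mvar n) \<subseteq> mpolys (Suc n)"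
  proof
    fix y assume "y \<in> adjoin ?S (mvar n)"
    then obtain \<phi> where \<phi>: "\<phi> \<in> polys_over ?S" "y = poly \<phi> (mvar n)" by (rule adjoinE)
    have "poly \<phi> (mvar n) = (\<Sum>i\<le>degree \<phi>. coeff \<phi> i * mvar n ^ i)" by (rule poly_altdef)
    also have "\<dots> \<in> mpolys (Suc n)"
      using coeff_polys_over[OF \<phi>(1)] mpolys_mono[of n "Suc n"] mvar_in_mpolys
      by (intro subring_sum[OF subring_mpolys] subring_mult[OF subring_mpolys]
          subring_power[OF subring_mpolys]) auto
    finally show "y \<in> mpolys (Suc n)" using \<phi>(2) by simp
  qed
  show "mpolys (Suc n) \<subseteq> adjoin ?S (mvar n)"
  proof
    fix p :: "'a mpoly" assume p: "p \<in> mpolys (Suc n)"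
    have "Poly_Mapping.single mon (Poly_Mapping.lookup p mon) \<in> adjoin ?S (mvar n)"
      if mon: "mon \<in> Poly_Mapping.keys p" for mon
    proof -
      let ?mon' = "mon - Poly_Mapping.single n (Poly_Mapping.lookup mon n)"
      have "i < n" if "i \<in> Poly_Mapping.keys ?mon'" for i
        using that mpolysD[OF p mon, of i]
        by (auto simp: in_keys_iff lookup_minus lookup_single when_def split: if_splits)
      then have "Poly_Mapping.single ?mon' (Poly_Mapping.lookup p mon) \<in> ?S"
        by (intro mpolysI) (simp split: if_splits)
      then show ?thesis
        unfolding single_split_last[of mon _ n]
        using subset_adjoin[OF subring_mpolys] gen_in_adjoin[OF subring_mpolys]
        by (intro subring_mult[OF T] subring_power[OF T]) auto
    qed
    then have "(\<Sum>mon\<in>Poly_Mapping.keys p. Poly_Mapping.single mon (Poly_Mapping.lookup p mon))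
        \<in> adjoin ?S (mvar n)"
      by (intro subring_sum[OF T])
    then show "p \<in> adjoin ?S (mvar n)" by (simp only: sum_single_keys)
  qed
qed

lemma jacobson_mpolys:
  assumes "jacobson (UNIV :: 'a::comm_ring_1 set)"
  shows "jacobson (mpolys n :: 'a mpoly set)"
proof (induction n)
  case 0
  show ?case
    unfolding mpolys_0 using assms
    by (intro jacobson_range_hom) (simp_all add: single_add mult_single)
next
  case (Suc n)
  then show ?case unfolding mpolys_Suc by (rule jacobson_adjoin[OF subring_mpolys])
qed

theorem mainTheorem5:
  assumes "coherent (UNIV :: 'a::comm_ring_1 set)"
    and "noetherian (UNIV :: 'a set)"
    and "fin_jacobson (UNIV :: 'a set)"
  shows "fin_jacobson (mpolys n :: (((nat, nat) poly_mapping, 'a) poly_mapping) set)"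
proof -
  have "jacobson (UNIV :: 'a set)"
    using jacobson_if_noetherian_fin_jacobson[OF assms(2,3)] .
  then have "jacobson (mpolys n :: 'a mpoly set)"
    by (rule jacobson_mpolys)
  then show ?thesis by (rule fin_jacobson_if_jacobson[OF subring_mpolys])
qed

end
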